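(* Let $\mathcal{G}$ be a non-trivial hereditary graph class. Then there exists a graph $Z$ such that (1) $Z$ is a block-graph, (2) $Z\notin\mathcal{B}(\mathcal{G})$, and (3) for every $v\in V(Z)$, $Z\setminus v\in\mathcal{B}(\mathcal{G})$.
   Context: All graphs are finite, simple and undirected. A graph is biconnected if every two of its vertices lie on a common cycle. A block of $G$ is an isolated vertex, a bridge (an edge whose removal increases the number of components, with its endpoints), or a maximal biconnected subgraph; $G$ is a block-graph if its only block is $G$ itself. A class is hereditary if closed under induced subgraphs, and non-trivial if it contains at least one non-empty graph and is not the class of all graphs. $\mathcal{B}(\mathcal{G})$ is the class of graphs all of whose blocks belong to $\mathcal{G}$. *)

theory Defs
  imports Main
begin

record ugraph =
  verts :: "nat set"
  edges :: "nat set set"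

definition graph :: "ugraph \<Rightarrow> bool" where
  "graph G \<longleftrightarrow> finite (verts G) \<and>
     (\<forall>e\<in>edges G. \<exists>u v. u \<noteq> v \<and> u \<in> verts G \<and> v \<in> verts G \<and> e = {u, v})"

definition all_graphs :: "ugraph set" where
  "all_graphs = {G. graph G}"

definition induced :: "ugraph \<Rightarrow> nat set \<Rightarrow> ugraph" where
  "induced G S = \<lparr>verts = verts G \<inter> S, edges = {e\<in>edges G. e \<subseteq> S}\<rparr>"

definition delete_vertex :: "ugraph \<Rightarrow> nat \<Rightarrow> ugraph" where
  "delete_vertex G v = induced G (verts G - {v})"

definition subgraph :: "ugraph \<Rightarrow> ugraph \<Rightarrow> bool" where
  "subgraph H G \<longleftrightarrow> graph H \<and> graph G \<and> verts H \<subseteq> verts G \<and> edges H \<subseteq> edges G"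

definition isomorphic :: "ugraph \<Rightarrow> ugraph \<Rightarrow> bool" where
  "isomorphic G H \<longleftrightarrow> (\<exists>f. bij_betw f (verts G) (verts H) \<and>
     (\<forall>u\<in>verts G. \<forall>v\<in>verts G. {u, v} \<in> edges G \<longleftrightarrow> {f u, f v} \<in> edges H))"

definition graph_class :: "ugraph set \<Rightarrow> bool" where
  "graph_class \<G> \<longleftrightarrow> (\<forall>G\<in>\<G>. graph G) \<and>
     (\<forall>G H. G \<in> \<G> \<and> graph H \<and> isomorphic G H \<longrightarrow> H \<in> \<G>)"

definition hereditary :: "ugraph set \<Rightarrow> bool" where
  "hereditary \<G> \<longleftrightarrow> (\<forall>G\<in>\<G>. \<forall>S. S \<subseteq> verts G \<longrightarrow> induced G S \<in> \<G>)"

definition nontrivial :: "ugraph set \<Rightarrow> bool" where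
  "nontrivial \<G> \<longleftrightarrow> (\<exists>G\<in>\<G>. verts G \<noteq> {}) \<and> \<G> \<noteq> all_graphs"

definition is_cycle :: "ugraph \<Rightarrow> nat list \<Rightarrow> bool" where
  "is_cycle G xs \<longleftrightarrow> distinct xs \<and> length xs \<ge> 3 \<and> set xs \<subseteq> verts G \<and>
     (\<forall>i < length xs. {xs ! i, xs ! ((i + 1) mod length xs)} \<in> edges G)"

definition biconnected :: "ugraph \<Rightarrow> bool" where
  "biconnected G \<longleftrightarrow> graph G \<and> card (verts G) \<ge> 2 \<and>
     (\<forall>u\<in>verts G. \<forall>v\<in>verts G. u \<noteq> v \<longrightarrow>
        (\<exists>xs. is_cycle G xs \<and> u \<in> set xs \<and> v \<in> set xs))"

definition conn_rel :: "ugraph \<Rightarrow> (nat \<times> nat) set" where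
  "conn_rel G = {(u, v). u \<in> verts G \<and> v \<in> verts G \<and>
      (u, v) \<in> ({(x, y). {x, y} \<in> edges G})\<^sup>*}"

definition num_components :: "ugraph \<Rightarrow> nat" where
  "num_components G = card (verts G // conn_rel G)"

definition is_bridge :: "ugraph \<Rightarrow> nat set \<Rightarrow> bool" where
  "is_bridge G e \<longleftrightarrow> e \<in> edges G \<and>
     num_components \<lparr>verts = verts G, edges = edges G - {e}\<rparr> > num_components G"

definition is_block :: "ugraph \<Rightarrow> ugraph \<Rightarrow> bool" where
  "is_block G B \<longleftrightarrow> graph G \<and>
     ((\<exists>v\<in>verts G. (\<forall>e\<in>edges G. v \<notin> e) \<and> B = \<lparr>verts = {v}, edges = {}\<rparr>) \<or>
      (\<exists>e. is_bridge G e \<and> B = \<lparr>verts = e, edges = {e}\<rparr>) \<or>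
      (subgraph B G \<and> biconnected B \<and>
         (\<forall>H. subgraph H G \<and> biconnected H \<and> subgraph B H \<longrightarrow> H = B)))"

definition block_graph :: "ugraph \<Rightarrow> bool" where
  "block_graph G \<longleftrightarrow> is_block G G \<and> (\<forall>B. is_block G B \<longrightarrow> B = G)"

definition block_closure :: "ugraph set \<Rightarrow> ugraph set" ("\<B>") where
  "\<B> \<G> = {G. graph G \<and> (\<forall>B. is_block G B \<longrightarrow> B \<in> \<G>)}"

end

theory Submission
  imports Defs
begin

text \<open>If \<open>K\<^sub>2\<close> is not in the class, \<open>K\<^sub>2\<close> itself works: it is its own only block (a bridge),
  and deleting a vertex leaves a single vertex, which is in the class by heredity.
  Otherwise every isolated vertex and every bridge is a block lying in the class, and the
  class misses some biconnected graph: joining two new adjacent vertices to any graph outside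
  the class gives one, by heredity.  Take such a graph \<open>Z\<close> with the fewest vertices.  It has
  no bridge, since a cycle through the ends of an edge keeps them connected once the edge is
  removed, so \<open>Z\<close> is its own only block.  Every block of \<open>Z - v\<close> is an isolated vertex, a
  bridge, or a biconnected graph with fewer vertices than \<open>Z\<close>, hence lies in the class.\<close>

abbreviation K1 :: "nat \<Rightarrow> ugraph" where
  "K1 w \<equiv> \<lparr>verts = {w}, edges = {}\<rparr>"

abbreviation K2 :: "nat \<Rightarrow> nat \<Rightarrow> ugraph" where
  "K2 p q \<equiv> \<lparr>verts = {p, q}, edges = {{p, q}}\<rparr>"

definition adj :: "nat set set \<Rightarrow> (nat \<times> nat) set" where
  "adj E = {(x, y). {x, y} \<in> E}"

lemma sym_adj: "sym (adj E)"
  unfolding adj_def sym_def by (auto simp: insert_commute)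

lemma conn_rel_adj:
  "conn_rel G = {(u, v). u \<in> verts G \<and> v \<in> verts G \<and> (u, v) \<in> (adj (edges G))\<^sup>*}"
  unfolding conn_rel_def adj_def ..

lemma graph_edgeE:
  assumes "graph G" "e \<in> edges G"
  obtains u v where "u \<noteq> v" "u \<in> verts G" "v \<in> verts G" "e = {u, v}"
  using assms unfolding graph_def by blast

lemma graph_edge_ends: "graph G \<Longrightarrow> {x, y} \<in> edges G \<Longrightarrow> x \<noteq> y \<and> x \<in> verts G \<and> y \<in> verts G"
  unfolding graph_def by (metis doubleton_eq_iff)

lemma graph_iff: "graph G \<longleftrightarrow> finite (verts G) \<and> (\<forall>e\<in>edges G. e \<subseteq> verts G \<and> card e = 2)"
proof -
  have "(\<exists>u v. u \<noteq> v \<and> u \<in> V \<and> v \<in> V \<and> e = {u, v}) \<longleftrightarrow> e \<subseteq> V \<and> card e = 2" for e V :: "nat set"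
    unfolding card_2_iff by auto
  then show ?thesis unfolding graph_def by simp
qed

lemma graph_finite_verts: "graph G \<Longrightarrow> finite (verts G)"
  unfolding graph_def by simp

lemma graph_induced: "graph G \<Longrightarrow> graph (induced G S)"
  unfolding graph_iff induced_def by auto

lemma subgraph_antisym: "subgraph A B \<Longrightarrow> subgraph B A \<Longrightarrow> A = B"
  unfolding subgraph_def by (intro ugraph.equality) auto

definition relabel :: "(nat \<Rightarrow> nat) \<Rightarrow> ugraph \<Rightarrow> ugraph" where
  "relabel f G = \<lparr>verts = f ` verts G, edges = (`) f ` edges G\<rparr>"

lemma graph_relabel:
  assumes "graph G" "inj_on f (verts G)"
  shows "graph (relabel f G)"
proof -
  have "card (f ` e) = card e" if "e \<subseteq> verts G" for e
    using assms(2) that by (auto intro: card_image inj_on_subset)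
  then show ?thesis using assms(1) unfolding graph_iff relabel_def by auto
qed

lemma isomorphic_relabel:
  assumes "graph G" "inj_on f (verts G)"
  shows "isomorphic G (relabel f G)"
  unfolding isomorphic_def
proof (intro exI conjI ballI)
  show "bij_betw f (verts G) (verts (relabel f G))"
    using assms(2) unfolding relabel_def by (simp add: bij_betw_def)
next
  fix u v assume uv: "u \<in> verts G" "v \<in> verts G"
  show "{u, v} \<in> edges G \<longleftrightarrow> {f u, f v} \<in> edges (relabel f G)"
  proof
    assume "{u, v} \<in> edges G"
    then show "{f u, f v} \<in> edges (relabel f G)"
      unfolding relabel_def using image_eqI[of "{f u, f v}" "(`) f" "{u, v}"] by simp
  next
    assume "{f u, f v} \<in> edges (relabel f G)"
    then obtain e where e: "e \<in> edges G" "f ` {u, v} = f ` e"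
      unfolding relabel_def by auto
    have "e \<subseteq> verts G" using assms(1) e(1) by (auto elim: graph_edgeE)
    then have "{u, v} = e" using inj_on_image_eq_iff[OF assms(2), of "{u, v}" e] e(2) uv by simp
    then show "{u, v} \<in> edges G" using e(1) by simp
  qed
qed

lemma graph_class_graph: "graph_class \<G> \<Longrightarrow> G \<in> \<G> \<Longrightarrow> graph G"
  unfolding graph_class_def by blast

lemma graph_class_relabel:
  assumes "graph_class \<G>" "G \<in> \<G>" "inj_on f (verts G)"
  shows "relabel f G \<in> \<G>"
  using assms graph_class_graph[OF assms(1,2)] graph_relabel isomorphic_relabel
  unfolding graph_class_def by blast

lemma K1_in_class:
  assumes "graph_class \<G>" "hereditary \<G>" "nontrivial \<G>"
  shows "K1 w \<in> \<G>"
proof -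
  obtain G w0 where G: "G \<in> \<G>" "w0 \<in> verts G"
    using assms(3) unfolding nontrivial_def by blast
  have "{e \<in> edges G. e \<subseteq> {w0}} = {}"
    using graph_class_graph[OF assms(1) G(1)] by (auto elim: graph_edgeE)
  then have "induced G {w0} = K1 w0"
    using G(2) unfolding induced_def by auto
  moreover have "induced G {w0} \<in> \<G>" using assms(2) G unfolding hereditary_def by simp
  ultimately have "K1 w0 \<in> \<G>" by simp
  moreover have "relabel (\<lambda>_. w) (K1 w0) = K1 w" unfolding relabel_def by simp
  ultimately show ?thesis using graph_class_relabel[OF assms(1), of "K1 w0" "\<lambda>_. w"] by simp
qed

lemma empty_graph_in_class:
  assumes "graph_class \<G>" "hereditary \<G>" "nontrivial \<G>"
  shows "\<lparr>verts = {}, edges = {}\<rparr> \<in> \<G>"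
proof -
  have "induced (K1 0) {} \<in> \<G>"
    using assms(2) K1_in_class[OF assms] unfolding hereditary_def by blast
  then show ?thesis unfolding induced_def by simp
qed

lemma K2_in_class:
  assumes "graph_class \<G>" "K2 0 1 \<in> \<G>" "p \<noteq> q"
  shows "K2 p q \<in> \<G>"
proof -
  let ?f = "\<lambda>x::nat. if x = 0 then p else q"
  have "inj_on ?f {0, 1}" using assms(3) by (simp add: inj_on_def)
  moreover have "relabel ?f (K2 0 1) = K2 p q" unfolding relabel_def by (simp add: insert_commute)
  ultimately show ?thesis using graph_class_relabel[OF assms(1,2), of ?f] by simp
qed

lemma rtrancl_along_list:
  assumes "\<forall>k. Suc k < length ys \<longrightarrow> (ys ! k, ys ! Suc k) \<in> R" and "a \<in> set ys"
  shows "(hd ys, a) \<in> R\<^sup>*"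
proof -
  obtain i where i: "i < length ys" "a = ys ! i" using assms(2) by (auto simp: in_set_conv_nth)
  have "(ys ! 0, ys ! j) \<in> R\<^sup>*" if "j < length ys" for j
    using that by (induction j) (auto intro: rtrancl_into_rtrancl assms(1)[rule_format])
  moreover have "ys \<noteq> []" using i(1) by auto
  ultimately show ?thesis using i by (simp add: hd_conv_nth)
qed

lemma add_mod_neq_self:
  fixes m d n :: nat
  assumes "0 < d" "d < n"
  shows "(m + d) mod n \<noteq> m mod n"
  using assms mod_eq_dvd_iff_nat[of m "m + d" n] by (auto dest: dvd_imp_le)

lemma is_cycle_edges_inj:
  assumes "is_cycle G xs"
  shows "inj_on (\<lambda>i. {xs ! i, xs ! (Suc i mod length xs)}) {..<length xs}"
proof (rule inj_onI)
  let ?n = "length xs"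
  fix i j assume ij: "i \<in> {..<?n}" "j \<in> {..<?n}"
    and eq: "{xs ! i, xs ! (Suc i mod ?n)} = {xs ! j, xs ! (Suc j mod ?n)}"
  have dist: "distinct xs" and n3: "3 \<le> ?n" using assms unfolding is_cycle_def by auto
  have "0 < ?n" using n3 by linarith
  then have idx: "Suc i mod ?n < ?n" "Suc j mod ?n < ?n" by (rule mod_less_divisor)+
  from eq consider "xs ! i = xs ! j" | "xs ! i = xs ! (Suc j mod ?n)" "xs ! (Suc i mod ?n) = xs ! j"
    by (auto simp: doubleton_eq_iff)
  then show "i = j"
  proof cases
    case 1
    then show ?thesis using dist ij by (simp add: nth_eq_iff_index_eq)
  next
    case 2
    then have "i = Suc j mod ?n" "Suc i mod ?n = j"
      using dist ij idx by (simp_all add: nth_eq_iff_index_eq)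
    then have "(j + 2) mod ?n = j mod ?n" using ij by (simp add: mod_Suc_eq)
    then show ?thesis using add_mod_neq_self[of 2 ?n j] n3 by simp
  qed
qed

text \<open>Walk around the cycle starting just after the removed edge; since the cycle edges are
  pairwise distinct, no later step uses it.\<close>
lemma is_cycle_connected_Diff_edge:
  assumes cyc: "is_cycle G xs" and a: "a \<in> set xs" and b: "b \<in> set xs"
  shows "(a, b) \<in> (adj (edges G - {e}))\<^sup>*"
proof -
  let ?n = "length xs" and ?R = "adj (edges G - {e})"
  define c where "c i = {xs ! i, xs ! (Suc i mod ?n)}" for i
  have n3: "3 \<le> ?n" and c_edge: "\<And>i. i < ?n \<Longrightarrow> c i \<in> edges G"
    using cyc unfolding is_cycle_def c_def by auto
  obtain m where m: "m < ?n" and c_e: "\<And>j. j < ?n \<Longrightarrow> c j = e \<Longrightarrow> j = m"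
  proof (cases "\<exists>j<?n. c j = e")
    case True
    then show ?thesis
      using that is_cycle_edges_inj[OF cyc] unfolding c_def inj_on_def by (metis lessThan_iff)
  next
    case False
    then show ?thesis using that n3 by force
  qed
  define ys where "ys = rotate (Suc m) xs"
  have step: "\<forall>k. Suc k < length ys \<longrightarrow> (ys ! k, ys ! Suc k) \<in> ?R"
  proof (intro allI impI)
    fix k assume k: "Suc k < length ys"
    define j where "j = (Suc m + k) mod ?n"
    have len: "length ys = ?n" unfolding ys_def by simp
    have j: "j < ?n" unfolding j_def using n3 by (intro mod_less_divisor) linarith
    have ys_k: "ys ! k = xs ! j" unfolding ys_def j_def by (rule nth_rotate) (use k len in simp)
    have ys_Suc_k: "ys ! Suc k = xs ! (Suc j mod ?n)"
      unfolding ys_def j_def by (subst nth_rotate) (use k len in \<open>simp_all add: mod_Suc_eq\<close>)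
    have "j \<noteq> m"
      using add_mod_neq_self[of "Suc k" ?n m] k m unfolding j_def ys_def by simp
    then have "c j \<in> edges G - {e}" using c_edge c_e j by blast
    then show "(ys ! k, ys ! Suc k) \<in> ?R" unfolding adj_def c_def ys_k ys_Suc_k by simp
  qed
  have "set ys = set xs" unfolding ys_def by simp
  then have "(hd ys, a) \<in> ?R\<^sup>*" "(hd ys, b) \<in> ?R\<^sup>*"
    using rtrancl_along_list[OF step] a b by auto
  then show ?thesis using sym_rtrancl[OF sym_adj] by (meson rtrancl_trans symD)
qed

lemma biconnected_graph: "biconnected G \<Longrightarrow> graph G"
  unfolding biconnected_def by simp

lemma biconnected_no_bridge:
  assumes bc: "biconnected G"
  shows "\<not> is_bridge G e"
proof
  assume br: "is_bridge G e"
  have "adj (edges G) \<subseteq> (adj (edges G - {e}))\<^sup>*"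
  proof (rule subrelI)
    fix x y assume xy: "(x, y) \<in> adj (edges G)"
    show "(x, y) \<in> (adj (edges G - {e}))\<^sup>*"
    proof (cases "{x, y} = e")
      case False
      then have "(x, y) \<in> adj (edges G - {e})" using xy unfolding adj_def by simp
      then show ?thesis by (rule r_into_rtrancl)
    next
      case True
      have "x \<noteq> y" "x \<in> verts G" "y \<in> verts G"
        using graph_edge_ends[OF biconnected_graph[OF bc]] xy unfolding adj_def by auto
      then obtain xs where "is_cycle G xs" "x \<in> set xs" "y \<in> set xs"
        using bc unfolding biconnected_def by blast
      then show ?thesis by (rule is_cycle_connected_Diff_edge)
    qed
  qed
  then have "(adj (edges G))\<^sup>* \<subseteq> (adj (edges G - {e}))\<^sup>*"
    by (rule rtrancl_subset_rtrancl)
  moreover have "(adj (edges G - {e}))\<^sup>* \<subseteq> (adj (edges G))\<^sup>*"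
    by (rule rtrancl_mono) (auto simp: adj_def)
  ultimately have "(adj (edges G))\<^sup>* = (adj (edges G - {e}))\<^sup>*" by (rule equalityI)
  then have "conn_rel \<lparr>verts = verts G, edges = edges G - {e}\<rparr> = conn_rel G"
    unfolding conn_rel_adj by simp
  then show False using br unfolding is_bridge_def num_components_def by simp
qed

lemma biconnected_cycle_through:
  assumes "biconnected G" "v \<in> verts G"
  obtains xs where "is_cycle G xs" "v \<in> set xs"
proof -
  have "2 \<le> card (verts G)" using assms(1) unfolding biconnected_def by simp
  have "\<not> verts G \<subseteq> {v}"
  proof
    assume "verts G \<subseteq> {v}"
    then have "card (verts G) \<le> card {v}" by (rule card_mono[rotated]) simp
    then show False using \<open>2 \<le> card (verts G)\<close> by simp
  qed
  then obtain u where "u \<in> verts G" "u \<noteq> v" by blast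
  then show ?thesis using that assms unfolding biconnected_def by blast
qed

lemma biconnected_vertex_on_edge:
  assumes "biconnected G" "v \<in> verts G"
  obtains e where "e \<in> edges G" "v \<in> e"
proof -
  obtain xs where xs: "is_cycle G xs" "v \<in> set xs"
    by (rule biconnected_cycle_through[OF assms])
  then obtain i where "i < length xs" "v = xs ! i" by (auto simp: in_set_conv_nth)
  then show ?thesis using that xs(1) unfolding is_cycle_def by blast
qed

lemma biconnected_card_ge_3:
  assumes "biconnected G"
  shows "3 \<le> card (verts G)"
proof -
  obtain v where "v \<in> verts G"
    using assms unfolding biconnected_def by fastforce
  then obtain xs where "is_cycle G xs" by (rule biconnected_cycle_through[OF assms])
  then have "length xs = card (set xs)" "3 \<le> length xs" "set xs \<subseteq> verts G"
    unfolding is_cycle_def by (auto simp: distinct_card)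
  moreover have "card (set xs) \<le> card (verts G)"
    using calculation(3) graph_finite_verts[OF biconnected_graph[OF assms]] by (rule card_mono[rotated])
  ultimately show ?thesis by simp
qed

lemma is_blockE:
  assumes "is_block G B"
  obtains w where "w \<in> verts G" "\<forall>e\<in>edges G. w \<notin> e" "B = K1 w"
    | p q where "p \<noteq> q" "{p, q} \<in> edges G" "B = K2 p q"
    | "subgraph B G" "biconnected B"
proof -
  have "graph G" using assms unfolding is_block_def by simp
  then show ?thesis
    using assms that unfolding is_block_def is_bridge_def by (metis graph_edgeE)
qed

lemma biconnected_block_graph:
  assumes bc: "biconnected G"
  shows "block_graph G"
proof -
  have G: "graph G" "subgraph G G"
    using biconnected_graph[OF bc] unfolding subgraph_def by simp_all
  have "is_block G G" unfolding is_block_def using G bc subgraph_antisym by blast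
  moreover have "B = G" if B: "is_block G B" for B
  proof -
    have "\<not> (\<exists>v\<in>verts G. \<forall>e\<in>edges G. v \<notin> e)"
      using biconnected_vertex_on_edge[OF bc] by metis
    then have "subgraph B G \<and> biconnected B \<and>
        (\<forall>H. subgraph H G \<and> biconnected H \<and> subgraph B H \<longrightarrow> H = B)"
      using B biconnected_no_bridge[OF bc] unfolding is_block_def by blast
    then show "B = G" using G bc by blast
  qed
  ultimately show ?thesis unfolding block_graph_def by blast
qed

lemma block_graph_not_in_block_closure: "block_graph G \<Longrightarrow> G \<notin> \<G> \<Longrightarrow> G \<notin> \<B> \<G>"
  unfolding block_graph_def block_closure_def by blast

lemma verts_delete_vertex [simp]: "verts (delete_vertex G v) = verts G - {v}"
  unfolding delete_vertex_def induced_def by auto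

lemma graph_delete_vertex: "graph G \<Longrightarrow> graph (delete_vertex G v)"
  unfolding delete_vertex_def by (rule graph_induced)

lemma num_components_edgeless: "num_components \<lparr>verts = V, edges = {}\<rparr> = card V"
proof -
  have "conn_rel \<lparr>verts = V, edges = {}\<rparr> = Id_on V"
    unfolding conn_rel_adj adj_def by auto
  moreover have "V // Id_on V = (\<lambda>v. {v}) ` V"
    unfolding quotient_def by auto
  ultimately show ?thesis
    unfolding num_components_def by (simp add: card_image)
qed

lemma num_components_K2: "num_components (K2 p q) = 1"
proof -
  have "(p, q) \<in> adj {{p, q}}" "(q, p) \<in> adj {{p, q}}"
    unfolding adj_def by (simp_all add: insert_commute)
  then have "conn_rel (K2 p q) = {p, q} \<times> {p, q}"
    unfolding conn_rel_adj by auto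
  moreover have "{p, q} // ({p, q} \<times> {p, q}) = {{p, q}}"
    unfolding quotient_def by auto
  ultimately show ?thesis unfolding num_components_def by simp
qed

lemma graph_K2: "p \<noteq> q \<Longrightarrow> graph (K2 p q)"
  unfolding graph_def by auto

lemma block_graph_K2:
  assumes "p \<noteq> q"
  shows "block_graph (K2 p q)"
proof -
  have "is_bridge (K2 p q) {p, q}"
    using assms num_components_edgeless[of "{p, q}"] num_components_K2[of p q]
    unfolding is_bridge_def by simp
  then have "is_block (K2 p q) (K2 p q)"
    unfolding is_block_def using graph_K2[OF assms] by blast
  moreover have "B = K2 p q" if "is_block (K2 p q) B" for B
    using that
  proof (cases rule: is_blockE)
    case (2 p' q')
    then show ?thesis by simp
  next
    case 3
    then have "card (verts B) \<le> card {p, q}"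
      unfolding subgraph_def by (intro card_mono) auto
    moreover have "card {p, q} \<le> 2" by (simp add: card_insert_if)
    ultimately show ?thesis using biconnected_card_ge_3[OF 3(2)] by simp
  qed simp
  ultimately show ?thesis unfolding block_graph_def by blast
qed

lemma edgeless_in_block_closure:
  assumes "graph G" "edges G = {}" "\<And>w. K1 w \<in> \<G>"
  shows "G \<in> \<B> \<G>"
proof -
  have "B \<in> \<G>" if "is_block G B" for B
    using that
  proof (cases rule: is_blockE)
    case 3
    obtain v where "v \<in> verts B"
      using biconnected_card_ge_3[OF 3(2)] by fastforce
    then obtain e where "e \<in> edges B" by (rule biconnected_vertex_on_edge[OF 3(2)])
    then show ?thesis using 3(1) assms(2) unfolding subgraph_def by blast
  qed (use assms in simp_all)
  then show ?thesis using assms(1) unfolding block_closure_def by blast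
qed

lemma delete_vertex_K2_in_block_closure:
  assumes "\<And>w. K1 w \<in> \<G>" "p \<noteq> q" "v \<in> {p, q}"
  shows "delete_vertex (K2 p q) v \<in> \<B> \<G>"
proof (rule edgeless_in_block_closure[OF _ _ assms(1)])
  show "graph (delete_vertex (K2 p q) v)" using graph_K2[OF assms(2)] by (rule graph_delete_vertex)
  show "edges (delete_vertex (K2 p q) v) = {}"
    using assms(3) by (auto simp: delete_vertex_def induced_def)
qed

lemma in_block_closure_if_small:
  assumes "graph G"
    and "\<And>w. K1 w \<in> \<G>" and "\<And>p q. p \<noteq> q \<Longrightarrow> K2 p q \<in> \<G>"
    and "\<And>H. biconnected H \<Longrightarrow> card (verts H) < n \<Longrightarrow> H \<in> \<G>"
    and "card (verts G) < n"
  shows "G \<in> \<B> \<G>"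
proof -
  have "B \<in> \<G>" if "is_block G B" for B
    using that
  proof (cases rule: is_blockE)
    case 3
    have "card (verts B) \<le> card (verts G)"
      using 3(1) graph_finite_verts[OF assms(1)] unfolding subgraph_def by (intro card_mono) auto
    then show ?thesis using assms(4)[OF 3(2)] assms(5) by simp
  qed (use assms in simp_all)
  then show ?thesis using assms(1) unfolding block_closure_def by blast
qed

definition join_K2 :: "ugraph \<Rightarrow> nat \<Rightarrow> nat \<Rightarrow> ugraph" where
  "join_K2 G a b = \<lparr>verts = verts G \<union> {a, b},
     edges = edges G \<union> (\<lambda>x. {x, a}) ` verts G \<union> (\<lambda>x. {x, b}) ` verts G \<union> {{a, b}}\<rparr>"

lemma join_K2_edges:
  assumes "x \<in> verts G"
  shows "{x, a} \<in> edges (join_K2 G a b)" "{a, x} \<in> edges (join_K2 G a b)"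
    and "{x, b} \<in> edges (join_K2 G a b)" "{b, x} \<in> edges (join_K2 G a b)"
    and "{a, b} \<in> edges (join_K2 G a b)" "{b, a} \<in> edges (join_K2 G a b)"
  using assms unfolding join_K2_def by (auto simp: insert_commute)

lemma graph_join_K2:
  assumes "graph G" "a \<notin> verts G" "b \<notin> verts G" "a \<noteq> b"
  shows "graph (join_K2 G a b)"
  using assms unfolding graph_iff join_K2_def by (auto simp: card_insert_if)

lemma induced_join_K2:
  assumes "graph G" "a \<notin> verts G" "b \<notin> verts G"
  shows "induced (join_K2 G a b) (verts G) = G"
proof -
  have "{e \<in> edges (join_K2 G a b). e \<subseteq> verts G} = edges G"
    using assms by (auto simp: join_K2_def elim: graph_edgeE)
  then show ?thesis
    unfolding induced_def using assms(2,3) by (intro ugraph.equality) (auto simp: join_K2_def)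
qed

lemma is_cycle_3:
  assumes "distinct [p, q, r]" "{p, q, r} \<subseteq> verts G"
    and "{p, q} \<in> edges G" "{q, r} \<in> edges G" "{r, p} \<in> edges G"
  shows "is_cycle G [p, q, r]"
  unfolding is_cycle_def
proof (intro conjI allI impI)
  fix i assume "i < length [p, q, r]"
  then consider "i = 0" | "i = 1" | "i = 2" by fastforce
  then show "{[p, q, r] ! i, [p, q, r] ! ((i + 1) mod length [p, q, r])} \<in> edges G"
    by cases (use assms in simp_all)
qed (use assms in simp_all)

lemma is_cycle_4:
  assumes "distinct [p, q, r, s]" "{p, q, r, s} \<subseteq> verts G"
    and "{p, q} \<in> edges G" "{q, r} \<in> edges G" "{r, s} \<in> edges G" "{s, p} \<in> edges G"
  shows "is_cycle G [p, q, r, s]"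
  unfolding is_cycle_def
proof (intro conjI allI impI)
  fix i assume "i < length [p, q, r, s]"
  then consider "i = 0" | "i = 1" | "i = 2" | "i = 3" by fastforce
  then show "{[p, q, r, s] ! i, [p, q, r, s] ! ((i + 1) mod length [p, q, r, s])} \<in> edges G"
    by cases (use assms in simp_all)
qed (use assms in simp_all)

lemma biconnected_join_K2:
  assumes G: "graph G" "verts G \<noteq> {}" and ab: "a \<notin> verts G" "b \<notin> verts G" "a \<noteq> b"
  shows "biconnected (join_K2 G a b)"
  unfolding biconnected_def
proof (intro conjI ballI impI)
  let ?J = "join_K2 G a b"
  show J: "graph ?J" using graph_join_K2[OF G(1) ab] .
  have "card {a, b} \<le> card (verts ?J)"
    using graph_finite_verts[OF J] by (intro card_mono) (auto simp: join_K2_def)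
  then show "2 \<le> card (verts ?J)" using ab(3) by simp
next
  fix u v assume uv: "u \<in> verts (join_K2 G a b)" "v \<in> verts (join_K2 G a b)" "u \<noteq> v"
  show "\<exists>xs. is_cycle (join_K2 G a b) xs \<and> u \<in> set xs \<and> v \<in> set xs"
  proof (cases "u \<in> verts G \<and> v \<in> verts G")
    case True
    have "is_cycle (join_K2 G a b) [u, a, v, b]"
      using True uv(3) ab by (intro is_cycle_4) (auto simp: join_K2_edges, auto simp: join_K2_def)
    then show ?thesis by auto
  next
    case False
    then obtain w where w: "w \<in> verts G" "{u, v} \<subseteq> {w, a, b}"
      using uv G(2) unfolding join_K2_def by auto
    have "is_cycle (join_K2 G a b) [w, a, b]"
      using w(1) ab by (intro is_cycle_3) (auto simp: join_K2_edges, auto simp: join_K2_def)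
    then show ?thesis using w(2) by auto
  qed
qed

lemma exists_biconnected_not_in_class:
  assumes "graph_class \<G>" "hereditary \<G>" "nontrivial \<G>"
  obtains Z where "biconnected Z" "Z \<notin> \<G>"
proof -
  obtain H where H: "graph H" "H \<notin> \<G>"
    using assms(3) graph_class_graph[OF assms(1)] unfolding nontrivial_def all_graphs_def by blast
  have "verts H \<noteq> {}"
  proof
    assume "verts H = {}"
    moreover have "edges H = {}" using H(1) calculation unfolding graph_iff by auto
    ultimately have "H = \<lparr>verts = {}, edges = {}\<rparr>" by (intro ugraph.equality) simp_all
    then show False using H(2) empty_graph_in_class[OF assms] by simp
  qed
  obtain a b where ab: "a \<notin> verts H" "b \<notin> verts H" "a \<noteq> b"
    using graph_finite_verts[OF H(1)]
    by (metis ex_new_if_finite finite_insert infinite_UNIV_nat insertCI)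
  have "verts H \<subseteq> verts (join_K2 H a b)" by (auto simp: join_K2_def)
  then have "join_K2 H a b \<notin> \<G>"
    using assms(2) H(2) induced_join_K2[OF H(1) ab(1,2)] unfolding hereditary_def by metis
  then show ?thesis using that biconnected_join_K2[OF H(1) \<open>verts H \<noteq> {}\<close> ab] by blast
qed

lemma minimal_biconnected_not_in_class:
  assumes "graph_class \<G>" "hereditary \<G>" "nontrivial \<G>"
  obtains Z where "biconnected Z" "Z \<notin> \<G>"
    and "\<And>H. biconnected H \<Longrightarrow> card (verts H) < card (verts Z) \<Longrightarrow> H \<in> \<G>"
proof -
  obtain Z0 where "biconnected Z0" "Z0 \<notin> \<G>"
    by (rule exists_biconnected_not_in_class[OF assms])
  then obtain Z where Z: "biconnected Z" "Z \<notin> \<G>"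
    and least: "\<And>H. biconnected H \<Longrightarrow> H \<notin> \<G> \<Longrightarrow> card (verts Z) \<le> card (verts H)"
    using ex_has_least_nat[of "\<lambda>Z. biconnected Z \<and> Z \<notin> \<G>" Z0 "\<lambda>Z. card (verts Z)"] by blast
  show ?thesis by (rule that[OF Z]) (meson least not_le)
qed

theorem lemma3:
  fixes \<G> :: "ugraph set"
  assumes "graph_class \<G>" and "hereditary \<G>" and "nontrivial \<G>"
  shows "\<exists>Z. graph Z \<and> block_graph Z \<and> Z \<notin> \<B> \<G> \<and>
           (\<forall>v\<in>verts Z. delete_vertex Z v \<in> \<B> \<G>)"
proof (cases "K2 0 1 \<in> \<G>")
  case True
  obtain Z where Z: "biconnected Z" "Z \<notin> \<G>"
    and min: "\<And>H. biconnected H \<Longrightarrow> card (verts H) < card (verts Z) \<Longrightarrow> H \<in> \<G>"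
    using minimal_biconnected_not_in_class[OF assms] by blast
  have "graph Z" using Z(1) by (rule biconnected_graph)
  have "delete_vertex Z v \<in> \<B> \<G>" if "v \<in> verts Z" for v
  proof (rule in_block_closure_if_small[OF _ K1_in_class[OF assms] K2_in_class[OF assms(1) True] min])
    show "graph (delete_vertex Z v)" using \<open>graph Z\<close> by (rule graph_delete_vertex)
    show "card (verts (delete_vertex Z v)) < card (verts Z)"
      using card_Diff1_less[OF graph_finite_verts[OF \<open>graph Z\<close>] that] by simp
  qed
  then show ?thesis
    using \<open>graph Z\<close> biconnected_block_graph[OF Z(1)] block_graph_not_in_block_closure[OF _ Z(2)]
    by blast
next
  case False
  have "graph (K2 0 1)" "block_graph (K2 0 1)" by (simp_all add: graph_K2 block_graph_K2)
  moreover have "delete_vertex (K2 0 1) v \<in> \<B> \<G>" if "v \<in> {0, 1}" for v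
    using that by (intro delete_vertex_K2_in_block_closure K1_in_class[OF assms]) simp_all
  ultimately show ?thesis using block_graph_not_in_block_closure[OF _ False] by auto
qed

end
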